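(* Let $X\subseteq\mathbb{R}^n$ be nonempty, closed, convex and bounded; let $F:X\to\mathbb{R}^n$ be $L_F$-Lipschitz and monotone on $X$; let $H:X\to\mathbb{R}^n$ be $L_H$-Lipschitz and $\mu_H$-strongly monotone on $X$; assume $\mathrm{SOL}(X,F)\neq\emptyset$. Let $\gamma>0$ and let $\{\eta_k\}$ be a nonincreasing positive sequence with $\gamma^2L_F^2+\gamma\eta_k\mu_H+\gamma^2\eta_k^2L_H^2\le0.5$ for all $k\ge0$. Let $x_0,\bar y_0\in X$, $\Gamma_0=0$, $\theta_0=\frac1{1-\gamma\eta_0\mu_H}$ and for $k\ge0$: $y_{k+1}=\Pi_X[x_k-\gamma(F(x_k)+\eta_kH(x_k))]$, $x_{k+1}=\Pi_X[x_k-\gamma(F(y_{k+1})+\eta_kH(y_{k+1}))]$, $\Gamma_{k+1}=\Gamma_k+\eta_k\theta_k$, $\bar y_{k+1}=\frac{\Gamma_k\bar y_k+\eta_k\theta_ky_{k+1}}{\Gamma_{k+1}}$, $\theta_{k+1}=\frac{\theta_k}{1-\gamma\eta_{k+1}\mu_H}$. Then: (i) For all $K\ge1$, $-B_H\,\mathrm{dist}(\bar y_K,\mathrm{SOL}(X,F))\le\mathrm{Gap}(\bar y_K,\mathrm{SOL}(X,F),H)\le\gamma^{-1}D_X^2\big/\sum_{j=0}^{K-1}\eta_j\theta_j$. (ii) For all $K\ge1$, $0\le\mathrm{Gap}(\bar y_K,X,F)\le\left(\gamma^{-1}\eta_0D_X^2+C_H\sqrt2\,D_X\sum_{j=0}^{K-1}\eta_j^2\theta_j\right)\big/\sum_{j=0}^{K-1}\eta_j\theta_j$.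 (iii) If $\sum_{j=0}^\infty\eta_j\theta_j=\infty$ and $\lim_{k\to\infty}\sum_{j=0}^k\eta_j^2\theta_j\big/\sum_{j=0}^k\eta_j\theta_j=0$, then $\{\bar y_k\}$ converges to the unique solution of the bilevel VI, i.e., the unique point of $\mathrm{SOL}(\mathrm{SOL}(X,F),H)$.
   Context: $\mathrm{SOL}(Y,G)=\{x\in Y: G(x)^\top(y-x)\ge0\ \forall y\in Y\}$. $\mathrm{Gap}(x,Y,G)=\sup_{y\in Y}G(y)^\top(x-y)$. $\Pi_X$ Euclidean projection; $\mathrm{dist}(x,Y)=\|x-\Pi_Y[x]\|$. $D_X^2=\sup_{x,y\in X}\frac12\|x-y\|^2$, $B_H=\sup_{x\in\mathrm{SOL}(X,F)}\|H(x)\|$, $C_H=\sup_{x\in X}\|H(x)\|$. $H$ is $\mu_H$-strongly monotone if $(H(x)-H(y))^\top(x-y)\ge\mu_H\|x-y\|^2$, $\mu_H>0$. *)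

theory Defs
  imports "HOL-Analysis.Analysis"
begin

definition SOL :: "'a::euclidean_space set \<Rightarrow> ('a \<Rightarrow> 'a) \<Rightarrow> 'a set" where
  "SOL Y G = {x \<in> Y. \<forall>y\<in>Y. G x \<bullet> (y - x) \<ge> 0}"

definition Gap :: "'a::euclidean_space \<Rightarrow> 'a set \<Rightarrow> ('a \<Rightarrow> 'a) \<Rightarrow> real" where
  "Gap x Y G = (SUP y\<in>Y. G y \<bullet> (x - y))"

definition proj :: "'a::euclidean_space set \<Rightarrow> 'a \<Rightarrow> 'a" where
  "proj Y x = closest_point Y x"

definition distS :: "'a::euclidean_space \<Rightarrow> 'a set \<Rightarrow> real" where
  "distS x Y = norm (x - proj Y x)"

definition DX2 :: "'a::euclidean_space set \<Rightarrow> real" where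
  "DX2 X = (SUP p\<in>X \<times> X. (1/2) * (norm (fst p - snd p))\<^sup>2)"

definition BH :: "'a::euclidean_space set \<Rightarrow> ('a \<Rightarrow> 'a) \<Rightarrow> ('a \<Rightarrow> 'a) \<Rightarrow> real" where
  "BH X F H = (SUP x\<in>SOL X F. norm (H x))"

definition CH :: "'a::euclidean_space set \<Rightarrow> ('a \<Rightarrow> 'a) \<Rightarrow> real" where
  "CH X H = (SUP x\<in>X. norm (H x))"

definition monotone_op :: "'a::euclidean_space set \<Rightarrow> ('a \<Rightarrow> 'a) \<Rightarrow> bool" where
  "monotone_op X F \<longleftrightarrow> (\<forall>x\<in>X. \<forall>y\<in>X. (F x - F y) \<bullet> (x - y) \<ge> 0)"

definition strongly_monotone_op :: "real \<Rightarrow> 'a::euclidean_space set \<Rightarrow> ('a \<Rightarrow> 'a) \<Rightarrow> bool" where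
  "strongly_monotone_op \<mu> X F \<longleftrightarrow> \<mu> > 0 \<and>
     (\<forall>x\<in>X. \<forall>y\<in>X. (F x - F y) \<bullet> (x - y) \<ge> \<mu> * (norm (x - y))\<^sup>2)"

end

theory Submission
  imports Defs
begin

text \<open>For every \<open>z \<in> X\<close>, one extragradient step for the regularized operator \<open>F + \<eta>\<^sub>k H\<close> gives
  \<open>|x\<^sub>k\<^sub>+\<^sub>1 - z|\<^sup>2 \<le> (1 - \<gamma> \<eta>\<^sub>k \<mu>\<^sub>H) |x\<^sub>k - z|\<^sup>2 - 2\<gamma> F(z)\<bullet>(y\<^sub>k\<^sub>+\<^sub>1 - z) - 2\<gamma> \<eta>\<^sub>k H(z)\<bullet>(y\<^sub>k\<^sub>+\<^sub>1 - z)\<close>.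
  The weights \<open>\<theta>\<^sub>k\<close> exactly undo the contraction factor, so multiplying by \<open>\<theta>\<^sub>k\<close> (resp. \<open>\<eta>\<^sub>k \<theta>\<^sub>k\<close>,
  using that \<open>\<eta>\<close> is nonincreasing) and telescoping bounds the weighted averages of the gap terms,
  which are the gap terms at \<open>ybar\<^sub>K\<close>. For \<open>z \<in> SOL(X,F)\<close> the \<open>F\<close>-term is nonnegative, giving (i);
  for arbitrary \<open>z\<close> the \<open>H\<close>-term is at most \<open>C\<^sub>H \<surd>2 D\<^sub>X\<close>, giving (ii). Under the hypotheses of (iii)
  both bounds tend to \<open>0\<close>, so by Minty's lemma every cluster point of \<open>ybar\<close> solves the bilevel
  problem, whose solution is unique by strong monotonicity of \<open>H\<close>; compactness of \<open>X\<close> then gives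
  convergence.\<close>

text \<open>The hypotheses \<open>proj1\<close> and \<open>proj2\<close> are the variational characterizations of
  \<open>y = \<Pi>(x - \<gamma> gx)\<close> and \<open>x' = \<Pi>(x - \<gamma> gy)\<close>.\<close>
lemma extragradient_inequality:
  fixes x y x' z gx gy :: "'a::real_inner"
  assumes proj1: "(x - \<gamma> *\<^sub>R gx - y) \<bullet> (x' - y) \<le> 0"
    and proj2: "(x - \<gamma> *\<^sub>R gy - x') \<bullet> (z - x') \<le> 0"
    and lip: "\<gamma>\<^sup>2 * (norm (gy - gx))\<^sup>2 \<le> c * (norm (x - y))\<^sup>2"
  shows "(norm (x' - z))\<^sup>2 \<le> (norm (x - z))\<^sup>2 - (1 - c) * (norm (x - y))\<^sup>2 + 2 * \<gamma> * (gy \<bullet> (z - y))"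
proof -
  define p q w where "p = x - y" and "q = y - x'" and "w = y - z"
  have xyz: "x = y + p" "x' = y - q" "z = y - w" by (auto simp: p_def q_def w_def)
  have young: "2 * \<gamma> * ((gy - gx) \<bullet> q) \<le> \<gamma>\<^sup>2 * (norm (gy - gx))\<^sup>2 + (norm q)\<^sup>2"
  proof -
    have "0 \<le> (norm (\<gamma> *\<^sub>R (gy - gx) - q))\<^sup>2" by simp
    also have "\<dots> = \<gamma>\<^sup>2 * (norm (gy - gx))\<^sup>2 + (norm q)\<^sup>2 - 2 * \<gamma> * ((gy - gx) \<bullet> q)"
      unfolding power2_norm_eq_inner by (simp add: inner_diff inner_commute power2_eq_square algebra_simps)
    finally show ?thesis by simp
  qed
  have "- (p \<bullet> q) + \<gamma> * (gx \<bullet> q) \<le> 0"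
    using proj1 unfolding xyz by (simp add: inner_diff inner_add inner_commute algebra_simps)
  moreover have "p \<bullet> q - p \<bullet> w + q \<bullet> q - q \<bullet> w - \<gamma> * (gy \<bullet> q) + \<gamma> * (gy \<bullet> w) \<le> 0"
    using proj2 unfolding xyz by (simp add: inner_diff inner_add inner_commute algebra_simps)
  ultimately show ?thesis
    using young lip unfolding xyz
    by (simp add: power2_norm_eq_inner inner_diff inner_add inner_commute algebra_simps)
qed

lemma power2_norm_diff_le_split:
  fixes a b c :: "'a::real_inner"
  shows "(norm (a - c))\<^sup>2 \<le> 2 * (norm (a - b))\<^sup>2 + 2 * (norm (c - b))\<^sup>2"
proof -
  have "0 \<le> (norm ((a - b) + (c - b)))\<^sup>2" by simp
  then show ?thesis unfolding power2_norm_eq_inner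
    by (simp add: inner_diff inner_add inner_commute algebra_simps)
qed

lemma proj_in:
  assumes "closed X" "X \<noteq> {}"
  shows "proj X a \<in> X"
  unfolding proj_def using assms by (rule closest_point_in_set)

lemma proj_inner_le:
  fixes X :: "'a::euclidean_space set"
  assumes "convex X" "closed X" "z \<in> X"
  shows "(a - proj X a) \<bullet> (z - proj X a) \<le> 0"
  unfolding proj_def using assms by (rule closest_point_dot)

lemma power2_norm_add_scaleR_le:
  fixes u v :: "'a::real_normed_vector"
  assumes "norm u \<le> LF * d" "norm v \<le> LH * d" "0 \<le> \<eta>"
  shows "(norm (u + \<eta> *\<^sub>R v))\<^sup>2 \<le> 2 * (LF\<^sup>2 + \<eta>\<^sup>2 * LH\<^sup>2) * d\<^sup>2"
proof -
  have "norm (u + \<eta> *\<^sub>R v) \<le> LF * d + \<eta> * (LH * d)"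
    using assms norm_triangle_ineq[of u "\<eta> *\<^sub>R v"] mult_left_mono[OF assms(2,3)] by simp
  then have "(norm (u + \<eta> *\<^sub>R v))\<^sup>2 \<le> (LF * d + \<eta> * (LH * d))\<^sup>2"
    by (simp add: power_mono)
  also have "\<dots> \<le> 2 * (LF\<^sup>2 + \<eta>\<^sup>2 * LH\<^sup>2) * d\<^sup>2"
    using zero_le_power2[of "LF * d - \<eta> * (LH * d)"] by (simp add: power2_eq_square algebra_simps)
  finally show ?thesis .
qed

text \<open>Monotonicity of \<open>F\<close> and strong monotonicity of \<open>H\<close> move the operators from \<open>y'\<close> to \<open>z\<close>;
  the strong monotonicity term pays for the contraction factor \<open>1 - \<gamma> \<eta> \<mu>\<close>.\<close>
lemma extragradient_step_descent:
  fixes X :: "'a::euclidean_space set" and F H :: "'a \<Rightarrow> 'a"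
  assumes X: "closed X" "convex X"
    and F_lip: "LF-lipschitz_on X F" and F_mono: "monotone_op X F"
    and H_lip: "LH-lipschitz_on X H" and H_smono: "strongly_monotone_op \<mu> X H"
    and \<gamma>: "\<gamma> > 0" and \<eta>: "\<eta> > 0"
    and step: "\<gamma>\<^sup>2 * LF\<^sup>2 + \<gamma> * \<eta> * \<mu> + \<gamma>\<^sup>2 * \<eta>\<^sup>2 * LH\<^sup>2 \<le> 0.5"
    and x: "x \<in> X" and z: "z \<in> X"
    and y': "y' = proj X (x - \<gamma> *\<^sub>R (F x + \<eta> *\<^sub>R H x))"
    and x': "x' = proj X (x - \<gamma> *\<^sub>R (F y' + \<eta> *\<^sub>R H y'))"
  shows "(norm (x' - z))\<^sup>2 \<le> (1 - \<gamma> * \<eta> * \<mu>) * (norm (x - z))\<^sup>2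
           + 2 * \<gamma> * (F z \<bullet> (z - y')) + 2 * \<gamma> * \<eta> * (H z \<bullet> (z - y'))"
proof -
  have y'X: "y' \<in> X" and x'X: "x' \<in> X" using x by (auto simp: y' x' intro: proj_in X)
  define gx gy where "gx = F x + \<eta> *\<^sub>R H x" and "gy = F y' + \<eta> *\<^sub>R H y'"
  have "\<gamma>\<^sup>2 * (norm (gy - gx))\<^sup>2 \<le> \<gamma>\<^sup>2 * (2 * (LF\<^sup>2 + \<eta>\<^sup>2 * LH\<^sup>2) * (norm (x - y'))\<^sup>2)"
  proof (rule mult_left_mono)
    have "gy - gx = (F y' - F x) + \<eta> *\<^sub>R (H y' - H x)"
      by (simp add: gx_def gy_def algebra_simps)
    then show "(norm (gy - gx))\<^sup>2 \<le> 2 * (LF\<^sup>2 + \<eta>\<^sup>2 * LH\<^sup>2) * (norm (x - y'))\<^sup>2"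
      using lipschitz_on_normD[OF F_lip y'X x] lipschitz_on_normD[OF H_lip y'X x] \<eta>
      by (simp only:) (rule power2_norm_add_scaleR_le; simp add: norm_minus_commute)
  qed simp
  also have "\<dots> = 2 * (\<gamma>\<^sup>2 * LF\<^sup>2 + \<gamma>\<^sup>2 * \<eta>\<^sup>2 * LH\<^sup>2) * (norm (x - y'))\<^sup>2"
    by (simp add: algebra_simps)
  also have "\<dots> \<le> (1 - 2 * \<gamma> * \<eta> * \<mu>) * (norm (x - y'))\<^sup>2"
    using step by (intro mult_right_mono) auto
  finally have lip: "\<gamma>\<^sup>2 * (norm (gy - gx))\<^sup>2 \<le> (1 - 2 * \<gamma> * \<eta> * \<mu>) * (norm (x - y'))\<^sup>2" .
  have "(x - \<gamma> *\<^sub>R gx - y') \<bullet> (x' - y') \<le> 0"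
    using proj_inner_le[OF X(2,1) x'X] by (simp add: y' gx_def)
  moreover have "(x - \<gamma> *\<^sub>R gy - x') \<bullet> (z - x') \<le> 0"
    using proj_inner_le[OF X(2,1) z] by (simp add: x' gy_def)
  ultimately have "(norm (x' - z))\<^sup>2 \<le> (norm (x - z))\<^sup>2 - 2 * \<gamma> * \<eta> * \<mu> * (norm (x - y'))\<^sup>2
      + 2 * \<gamma> * (gy \<bullet> (z - y'))"
    using extragradient_inequality[OF _ _ lip] by simp
  moreover have "2 * \<gamma> * (gy \<bullet> (z - y')) \<le> 2 * \<gamma> * (F z \<bullet> (z - y')) + 2 * \<gamma> * \<eta> * (H z \<bullet> (z - y'))
      - 2 * (\<gamma> * \<eta> * \<mu> * (norm (z - y'))\<^sup>2)"
  proof -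
    have "(F z - F y') \<bullet> (z - y') \<ge> 0"
      using F_mono z y'X unfolding monotone_op_def by blast
    moreover have "\<eta> * ((H z - H y') \<bullet> (z - y')) \<ge> \<eta> * (\<mu> * (norm (z - y'))\<^sup>2)"
      using H_smono z y'X \<eta> unfolding strongly_monotone_op_def by (simp add: mult_left_mono)
    ultimately have "gy \<bullet> (z - y') \<le> F z \<bullet> (z - y') + \<eta> * (H z \<bullet> (z - y')) - \<eta> * \<mu> * (norm (z - y'))\<^sup>2"
      by (simp add: gy_def inner_add_left inner_diff_left algebra_simps)
    from mult_left_mono[OF this, of "2 * \<gamma>"] show ?thesis
      using \<gamma> by (simp add: algebra_simps)
  qed
  moreover have "\<gamma> * \<eta> * \<mu> * (norm (x - z))\<^sup>2
      \<le> 2 * (\<gamma> * \<eta> * \<mu> * (norm (x - y'))\<^sup>2) + 2 * (\<gamma> * \<eta> * \<mu> * (norm (z - y'))\<^sup>2)"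
    using mult_left_mono[OF power2_norm_diff_le_split[of x z y'], of "\<gamma> * \<eta> * \<mu>"]
      H_smono \<gamma> \<eta> unfolding strongly_monotone_op_def by (simp add: algebra_simps)
  ultimately show ?thesis
    by (simp add: left_diff_distrib)
qed

lemma sum_le_telescope:
  fixes w P :: "nat \<Rightarrow> real"
  assumes "\<And>k. w k \<le> P k - P (Suc k)" "P K \<ge> 0"
  shows "(\<Sum>k<K. w k) \<le> P 0"
proof -
  have "(\<Sum>k<K. w k) \<le> (\<Sum>k<K. P k - P (Suc k))" by (rule sum_mono) (rule assms(1))
  then show ?thesis using assms(2) by (simp add: sum_lessThan_telescope')
qed

text \<open>Minty's lemma: testing \<open>G\<close> at \<open>x + t (y - x)\<close> and letting \<open>t \<rightarrow> 0\<close> recovers \<open>G x \<bullet> (y - x) \<ge> 0\<close>.\<close>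
lemma Minty_imp_SOL:
  fixes X :: "'a::euclidean_space set" and G :: "'a \<Rightarrow> 'a"
  assumes X: "convex X" and G: "continuous_on X G" and x: "x \<in> X"
    and Minty: "\<And>z. z \<in> X \<Longrightarrow> G z \<bullet> (x - z) \<le> 0"
  shows "x \<in> SOL X G"
  unfolding SOL_def
proof (intro CollectI conjI x ballI)
  fix y assume y: "y \<in> X"
  define z where "z t = x + t *\<^sub>R (y - x)" for t :: real
  have zX: "z t \<in> X" if "0 \<le> t" "t \<le> 1" for t
    using convexD_alt[OF X x y that] by (simp add: z_def algebra_simps)
  have "((\<lambda>t. G (z t) \<bullet> (y - x)) \<longlongrightarrow> G (z 0) \<bullet> (y - x)) (at_right 0)"
  proof (intro tendsto_intros)
    have "continuous_on {0..1} (G \<circ> z)"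
    proof (rule continuous_on_compose)
      show "continuous_on {0..1} z" unfolding z_def by (intro continuous_intros)
      show "continuous_on (z ` {0..1}) G"
        using zX by (auto intro!: continuous_on_subset[OF G])
    qed
    then show "((\<lambda>t. G (z t)) \<longlongrightarrow> G (z 0)) (at_right 0)"
      by (auto simp: continuous_on_def at_within_Icc_at_right elim!: ballE[where x = 0])
  qed
  moreover have "\<forall>\<^sub>F t in at_right 0. G (z t) \<bullet> (y - x) \<ge> 0"
    unfolding eventually_at_right_field
  proof (intro exI[of _ 1] conjI allI impI)
    fix t :: real assume t: "0 < t" "t < 1"
    then have "- t * (G (z t) \<bullet> (y - x)) \<le> 0"
      using Minty[OF zX] t by (simp add: z_def inner_diff_right)
    then show "G (z t) \<bullet> (y - x) \<ge> 0" using t by (simp add: zero_le_mult_iff)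
  qed simp
  ultimately show "G x \<bullet> (y - x) \<ge> 0"
    by (intro tendsto_lowerbound) (auto simp: z_def)
qed

lemma SOL_subset: "SOL X G \<subseteq> X"
  unfolding SOL_def by blast

lemma SOL_eq_Minty:
  fixes X :: "'a::euclidean_space set" and G :: "'a \<Rightarrow> 'a"
  assumes "convex X" "continuous_on X G" "monotone_op X G"
  shows "SOL X G = X \<inter> (\<Inter>z\<in>X. {x. G z \<bullet> x \<le> G z \<bullet> z})"
proof (intro equalityI subsetI)
  fix x assume x: "x \<in> SOL X G"
  have "G z \<bullet> x \<le> G z \<bullet> z" if "z \<in> X" for z
    using x that assms(3) unfolding SOL_def monotone_op_def
    by (fastforce simp: inner_diff algebra_simps)
  then show "x \<in> X \<inter> (\<Inter>z\<in>X. {x. G z \<bullet> x \<le> G z \<bullet> z})"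
    using x SOL_subset by blast
next
  fix x assume "x \<in> X \<inter> (\<Inter>z\<in>X. {x. G z \<bullet> x \<le> G z \<bullet> z})"
  then show "x \<in> SOL X G"
    by (intro Minty_imp_SOL[OF assms(1,2)]) (auto simp: inner_diff_right)
qed

lemma compact_convex_SOL:
  fixes X :: "'a::euclidean_space set" and G :: "'a \<Rightarrow> 'a"
  assumes "compact X" "convex X" "continuous_on X G" "monotone_op X G"
  shows "compact (SOL X G)" "convex (SOL X G)"
  unfolding SOL_eq_Minty[OF assms(2-4)]
  by (auto intro!: compact_Int_closed closed_INT convex_Int convex_INT
      closed_halfspace_le convex_halfspace_le assms)

lemma SOL_strongly_monotone_unique:
  assumes "strongly_monotone_op \<mu> X G" "Y \<subseteq> X" "s \<in> SOL Y G" "t \<in> SOL Y G"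
  shows "s = t"
proof -
  have "G t \<bullet> (s - t) \<ge> 0" "G s \<bullet> (t - s) \<ge> 0"
    using assms(3,4) unfolding SOL_def by auto
  moreover have "(G t - G s) \<bullet> (t - s) = - (G t \<bullet> (s - t)) - G s \<bullet> (t - s)"
    by (simp add: inner_diff_left inner_diff_right algebra_simps)
  moreover have \<mu>: "\<mu> > 0" and "(G t - G s) \<bullet> (t - s) \<ge> \<mu> * (norm (t - s))\<^sup>2"
    using assms SOL_subset unfolding strongly_monotone_op_def by blast+
  ultimately have "\<mu> * (norm (t - s))\<^sup>2 \<le> 0" by linarith
  then show ?thesis using \<mu> by (simp add: mult_le_0_iff)
qed

lemma Gap_le:
  assumes "Y \<noteq> {}" "\<And>z. z \<in> Y \<Longrightarrow> G z \<bullet> (x - z) \<le> b"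
  shows "Gap x Y G \<le> b"
  unfolding Gap_def using assms by (rule cSUP_least)

lemma Gap_ge:
  fixes Y :: "'a::euclidean_space set"
  assumes "compact Y" "continuous_on Y G" "z \<in> Y"
  shows "G z \<bullet> (x - z) \<le> Gap x Y G"
proof -
  have "compact ((\<lambda>z. G z \<bullet> (x - z)) ` Y)"
    using assms by (intro compact_continuous_image continuous_intros) auto
  then show ?thesis
    unfolding Gap_def using assms(3) by (intro cSUP_upper bounded_imp_bdd_above compact_imp_bounded)
qed

lemma Gap_nonneg:
  fixes Y :: "'a::euclidean_space set"
  assumes "compact Y" "continuous_on Y G" "x \<in> Y"
  shows "0 \<le> Gap x Y G"
  using Gap_ge[OF assms, of x] by simp

lemma norm_le_SUP_norm:
  fixes Y :: "'a::euclidean_space set"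
  assumes "compact Y" "continuous_on Y G" "z \<in> Y"
  shows "norm (G z) \<le> (SUP z\<in>Y. norm (G z))"
proof -
  have "compact ((\<lambda>z. norm (G z)) ` Y)"
    using assms by (intro compact_continuous_image continuous_intros) auto
  then show ?thesis
    using assms(3) by (intro cSUP_upper bounded_imp_bdd_above compact_imp_bounded)
qed

lemma Gap_ge_neg_dist:
  fixes Y :: "'a::euclidean_space set"
  assumes "compact Y" "Y \<noteq> {}" "continuous_on Y G"
  shows "- (SUP z\<in>Y. norm (G z)) * distS x Y \<le> Gap x Y G"
proof -
  define p where "p = proj Y x"
  have p: "p \<in> Y" unfolding p_def using assms by (intro proj_in compact_imp_closed)
  have "- (SUP z\<in>Y. norm (G z)) * norm (x - p) \<le> - (norm (G p) * norm (x - p))"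
    using norm_le_SUP_norm[OF assms(1,3) p] by (simp add: mult_right_mono)
  also have "\<dots> \<le> G p \<bullet> (x - p)"
    using Cauchy_Schwarz_ineq2[of "G p" "x - p"] by linarith
  also have "\<dots> \<le> Gap x Y G" by (rule Gap_ge[OF assms(1,3) p])
  finally show ?thesis by (simp add: distS_def p_def)
qed

lemma power2_norm_diff_le_DX2:
  fixes X :: "'a::euclidean_space set"
  assumes "compact X" "a \<in> X" "b \<in> X"
  shows "(norm (a - b))\<^sup>2 \<le> 2 * DX2 X"
proof -
  have "compact ((\<lambda>p. (1/2) * (norm (fst p - snd p))\<^sup>2) ` (X \<times> X))"
    using assms by (intro compact_continuous_image compact_Times continuous_intros)
  then have "(1/2) * (norm (fst (a, b) - snd (a, b)))\<^sup>2 \<le> DX2 X"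
    unfolding DX2_def using assms by (intro cSUP_upper bounded_imp_bdd_above compact_imp_bounded) auto
  then show ?thesis by simp
qed

lemma norm_diff_le_DX2:
  fixes X :: "'a::euclidean_space set"
  assumes "compact X" "a \<in> X" "b \<in> X"
  shows "norm (a - b) \<le> sqrt 2 * sqrt (DX2 X)"
  using real_le_rsqrt[OF power2_norm_diff_le_DX2[OF assms]] by (simp add: real_sqrt_mult)

lemma LIMSEQ_if_subseq_limits_eq:
  fixes f :: "nat \<Rightarrow> 'a::metric_space"
  assumes K: "compact K" "\<And>n. f n \<in> K"
    and limits: "\<And>r t. strict_mono r \<Longrightarrow> (f \<circ> r) \<longlonglongrightarrow> t \<Longrightarrow> t = s"
  shows "f \<longlonglongrightarrow> s"
proof (rule ccontr)
  assume "\<not> f \<longlonglongrightarrow> s"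
  then obtain e where e: "e > 0" and far: "\<forall>N. \<exists>n\<ge>N. \<not> dist (f n) s < e"
    unfolding lim_sequentially by blast
  define A where "A = {n. dist (f n) s \<ge> e}"
  have A: "infinite A"
    unfolding A_def infinite_nat_iff_unbounded_le using far by (auto simp: not_less)
  obtain l r where r: "strict_mono r" and lim: "(f \<circ> enumerate A \<circ> r) \<longlonglongrightarrow> l"
    using compact_imp_seq_compact[OF K(1)] K(2) unfolding seq_compact_def by (metis comp_apply)
  have "strict_mono (enumerate A \<circ> r)"
    using strict_mono_enumerate[OF A] r by (simp add: strict_mono_def)
  then have "l = s" using limits lim by (simp add: comp_assoc)
  moreover have "\<forall>n. dist ((f \<circ> enumerate A \<circ> r) n) s \<ge> e"
    using enumerate_in_set[OF A] unfolding A_def by auto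
  ultimately show False using lim e unfolding lim_sequentially
    by (meson linorder_not_less order_refl)
qed

lemma subseq_limit_inner_le:
  fixes u :: "nat \<Rightarrow> 'a::real_inner"
  assumes "(u \<circ> r) \<longlonglongrightarrow> t" "strict_mono r" "b \<longlonglongrightarrow> 0" "\<And>K. K \<ge> 1 \<Longrightarrow> v \<bullet> (u K - z) \<le> b K"
  shows "v \<bullet> (t - z) \<le> 0"
proof (rule LIMSEQ_le)
  show "(\<lambda>n. v \<bullet> ((u \<circ> r) n - z)) \<longlonglongrightarrow> v \<bullet> (t - z)" by (intro tendsto_intros assms(1))
  show "(b \<circ> r) \<longlonglongrightarrow> 0" by (rule LIMSEQ_subseq_LIMSEQ[OF assms(3,2)])
  have "r n \<ge> 1" if "n \<ge> 1" for n using seq_suble[OF assms(2), of n] that by linarith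
  then show "\<exists>N. \<forall>n\<ge>N. v \<bullet> ((u \<circ> r) n - z) \<le> (b \<circ> r) n" using assms(4) by auto
qed

locale regularized_extragradient =
  fixes X :: "'a::euclidean_space set"
    and F H :: "'a \<Rightarrow> 'a"
    and LF LH \<mu>H \<gamma> :: real
    and \<eta> \<Gamma> \<theta> :: "nat \<Rightarrow> real"
    and x y ybar :: "nat \<Rightarrow> 'a"
  assumes X: "X \<noteq> {}" "closed X" "convex X" "bounded X"
    and F_lip: "LF-lipschitz_on X F" and F_mono: "monotone_op X F"
    and H_lip: "LH-lipschitz_on X H" and H_smono: "strongly_monotone_op \<mu>H X H"
    and SOL_ne: "SOL X F \<noteq> {}"
    and \<gamma>_pos: "\<gamma> > 0"
    and \<eta>_pos: "\<And>k. \<eta> k > 0"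
    and \<eta>_noninc: "\<And>k. \<eta> (Suc k) \<le> \<eta> k"
    and step: "\<And>k. \<gamma>\<^sup>2 * LF\<^sup>2 + \<gamma> * \<eta> k * \<mu>H + \<gamma>\<^sup>2 * (\<eta> k)\<^sup>2 * LH\<^sup>2 \<le> 0.5"
    and x0: "x 0 \<in> X" and ybar0: "ybar 0 \<in> X"
    and \<Gamma>0: "\<Gamma> 0 = 0"
    and \<theta>0: "\<theta> 0 = 1 / (1 - \<gamma> * \<eta> 0 * \<mu>H)"
    and y_rec: "\<And>k. y (Suc k) = proj X (x k - \<gamma> *\<^sub>R (F (x k) + \<eta> k *\<^sub>R H (x k)))"
    and x_rec: "\<And>k. x (Suc k) = proj X (x k - \<gamma> *\<^sub>R (F (y (Suc k)) + \<eta> k *\<^sub>R H (y (Suc k))))"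
    and \<Gamma>_rec: "\<And>k. \<Gamma> (Suc k) = \<Gamma> k + \<eta> k * \<theta> k"
    and ybar_rec: "\<And>k. ybar (Suc k) =
          (1 / \<Gamma> (Suc k)) *\<^sub>R (\<Gamma> k *\<^sub>R ybar k + (\<eta> k * \<theta> k) *\<^sub>R y (Suc k))"
    and \<theta>_rec: "\<And>k. \<theta> (Suc k) = \<theta> k / (1 - \<gamma> * \<eta> (Suc k) * \<mu>H)"
begin

lemma compact_X: "compact X"
  using X by (simp add: compact_eq_bounded_closed)

lemma continuous_F: "continuous_on X F"
  using F_lip by (rule lipschitz_on_continuous_on)

lemma continuous_H: "continuous_on X H"
  using H_lip by (rule lipschitz_on_continuous_on)

lemma compact_SOL: "compact (SOL X F)" and convex_SOL: "convex (SOL X F)"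
  using compact_convex_SOL[OF compact_X X(3) continuous_F F_mono] by auto

lemma continuous_H_SOL: "continuous_on (SOL X F) H"
  using continuous_H SOL_subset by (rule continuous_on_subset)

lemma contraction_pos: "1 - \<gamma> * \<eta> k * \<mu>H > 0"
proof -
  have "\<gamma>\<^sup>2 * LF\<^sup>2 \<ge> 0" "\<gamma>\<^sup>2 * (\<eta> k)\<^sup>2 * LH\<^sup>2 \<ge> 0" by auto
  then show ?thesis using step[of k] by linarith
qed

lemma \<theta>_pos: "\<theta> k > 0"
  by (induction k) (use \<theta>0 \<theta>_rec contraction_pos in auto)

text \<open>The paper's \<open>\<theta>\<^sub>k\<^sub>-\<^sub>1\<close>, with \<open>\<theta>\<^sub>-\<^sub>1 = 1\<close>.\<close>
definition \<theta>_prev :: "nat \<Rightarrow> real" where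
  "\<theta>_prev k = (case k of 0 \<Rightarrow> 1 | Suc j \<Rightarrow> \<theta> j)"

lemma \<theta>_contraction: "\<theta> k * (1 - \<gamma> * \<eta> k * \<mu>H) = \<theta>_prev k"
  using contraction_pos[of k] by (cases k) (auto simp: \<theta>_prev_def \<theta>0 \<theta>_rec)

lemma \<theta>_prev_pos: "\<theta>_prev k > 0"
  by (cases k) (auto simp: \<theta>_prev_def \<theta>_pos)

lemma \<Gamma>_eq_sum: "\<Gamma> K = (\<Sum>j<K. \<eta> j * \<theta> j)"
  by (induction K) (auto simp: \<Gamma>0 \<Gamma>_rec)

lemma weight_sum_pos: "K \<ge> 1 \<Longrightarrow> (\<Sum>j<K. \<eta> j * \<theta> j) > 0"
  using \<eta>_pos \<theta>_pos by (intro sum_pos) (auto simp: lessThan_empty_iff)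

lemma x_in_X: "x k \<in> X"
  by (cases k) (simp_all add: x0 x_rec proj_in X(1,2))

lemma y_in_X: "y (Suc k) \<in> X"
  by (simp add: y_rec proj_in X(1,2))

lemma ybar_in_X: "ybar k \<in> X"
proof (induction k)
  case (Suc k)
  have \<Gamma>: "\<Gamma> (Suc k) > 0" "\<Gamma> k \<ge> 0"
    using weight_sum_pos[of "Suc k"] sum_nonneg[of "{..<k}" "\<lambda>j. \<eta> j * \<theta> j"] \<eta>_pos \<theta>_pos
    by (auto simp: \<Gamma>_eq_sum less_imp_le)
  have "ybar (Suc k) = (1 - (\<eta> k * \<theta> k) / \<Gamma> (Suc k)) *\<^sub>R ybar k + ((\<eta> k * \<theta> k) / \<Gamma> (Suc k)) *\<^sub>R y (Suc k)"
    using \<Gamma> by (simp add: ybar_rec \<Gamma>_rec scaleR_add_right field_simps)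
  also have "\<dots> \<in> X"
    using \<Gamma> \<eta>_pos[of k] \<theta>_pos[of k] \<Gamma>_rec[of k]
    by (intro convexD_alt X Suc y_in_X) auto
  finally show ?case .
qed (rule ybar0)

lemma weighted_sum_ybar: "\<Gamma> K *\<^sub>R ybar K = (\<Sum>j<K. (\<eta> j * \<theta> j) *\<^sub>R y (Suc j))"
proof (induction K)
  case (Suc K)
  have "\<Gamma> (Suc K) \<noteq> 0" using weight_sum_pos[of "Suc K"] by (simp add: \<Gamma>_eq_sum)
  then show ?case using Suc by (simp add: ybar_rec)
qed (simp add: \<Gamma>0)

lemma weighted_inner_ybar:
  "(\<Sum>j<K. \<eta> j * \<theta> j) * (v \<bullet> (ybar K - z)) = (\<Sum>j<K. \<eta> j * \<theta> j * (v \<bullet> (y (Suc j) - z)))"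
proof -
  have "\<Gamma> K * (v \<bullet> (ybar K - z)) = v \<bullet> (\<Gamma> K *\<^sub>R ybar K) - \<Gamma> K * (v \<bullet> z)"
    by (simp add: inner_diff_right algebra_simps)
  also have "\<dots> = (\<Sum>j<K. \<eta> j * \<theta> j * (v \<bullet> (y (Suc j) - z)))"
    unfolding weighted_sum_ybar by (simp add: \<Gamma>_eq_sum inner_sum_right sum_distrib_right
        inner_diff_right right_diff_distrib sum_subtractf)
  finally show ?thesis by (simp add: \<Gamma>_eq_sum)
qed

lemma weighted_descent:
  assumes "z \<in> X"
  shows "\<theta> k * (norm (x (Suc k) - z))\<^sup>2 \<le> \<theta>_prev k * (norm (x k - z))\<^sup>2
    - 2 * \<gamma> * \<theta> k * (F z \<bullet> (y (Suc k) - z)) - 2 * \<gamma> * \<eta> k * \<theta> k * (H z \<bullet> (y (Suc k) - z))"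
proof -
  have "(norm (x (Suc k) - z))\<^sup>2 \<le> (1 - \<gamma> * \<eta> k * \<mu>H) * (norm (x k - z))\<^sup>2
      + 2 * \<gamma> * (F z \<bullet> (z - y (Suc k))) + 2 * \<gamma> * \<eta> k * (H z \<bullet> (z - y (Suc k)))"
    by (rule extragradient_step_descent[OF X(2,3) F_lip F_mono H_lip H_smono \<gamma>_pos \<eta>_pos step
          x_in_X assms y_rec x_rec])
  from mult_left_mono[OF this less_imp_le[OF \<theta>_pos[of k]]] show ?thesis
    by (simp add: \<theta>_contraction[symmetric] inner_diff_right algebra_simps)
qed

lemma H_inner_le_CH:
  assumes "z \<in> X" "w \<in> X"
  shows "H z \<bullet> (z - w) \<le> CH X H * sqrt 2 * sqrt (DX2 X)"
proof -
  have CH: "norm (H z) \<le> CH X H"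
    unfolding CH_def using compact_X continuous_H assms(1) by (rule norm_le_SUP_norm)
  have "H z \<bullet> (z - w) \<le> norm (H z) * norm (z - w)" by (rule norm_cauchy_schwarz)
  also have "\<dots> \<le> CH X H * (sqrt 2 * sqrt (DX2 X))"
    using CH order_trans[OF norm_ge_zero CH]
    by (intro mult_mono norm_diff_le_DX2 compact_X assms) auto
  finally show ?thesis by (simp add: mult.assoc)
qed

text \<open>Telescoping the descent inequality with the weights \<open>\<theta>\<close>; the \<open>F\<close>-term has a sign
  because \<open>z\<close> solves the lower-level problem.\<close>
lemma weighted_H_sum_le:
  assumes z: "z \<in> SOL X F"
  shows "(\<Sum>j<K. \<eta> j * \<theta> j * (H z \<bullet> (y (Suc j) - z))) \<le> DX2 X / \<gamma>"
proof -
  have zX: "z \<in> X" using z SOL_subset by blast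
  define a where "a k = (norm (x k - z))\<^sup>2" for k
  have "(\<Sum>j<K. 2 * \<gamma> * (\<eta> j * \<theta> j * (H z \<bullet> (y (Suc j) - z)))) \<le> \<theta>_prev 0 * a 0"
  proof (rule sum_le_telescope)
    fix k
    have "F z \<bullet> (y (Suc k) - z) \<ge> 0" using z y_in_X unfolding SOL_def by blast
    then have "0 \<le> 2 * \<gamma> * \<theta> k * (F z \<bullet> (y (Suc k) - z))"
      using \<gamma>_pos \<theta>_pos[of k] by simp
    then show "2 * \<gamma> * (\<eta> k * \<theta> k * (H z \<bullet> (y (Suc k) - z))) \<le> \<theta>_prev k * a k - \<theta>_prev (Suc k) * a (Suc k)"
      using weighted_descent[OF zX, of k] by (simp add: a_def \<theta>_prev_def algebra_simps)
  qed (simp add: a_def less_imp_le[OF \<theta>_prev_pos])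
  also have "\<dots> \<le> 2 * DX2 X"
    using power2_norm_diff_le_DX2[OF compact_X x0 zX] by (simp add: a_def \<theta>_prev_def)
  finally have "\<gamma> * (\<Sum>j<K. \<eta> j * \<theta> j * (H z \<bullet> (y (Suc j) - z))) \<le> DX2 X"
    by (simp add: sum_distrib_left[symmetric] mult.assoc)
  then show ?thesis using \<gamma>_pos by (simp add: pos_le_divide_eq mult.commute)
qed

text \<open>Here \<open>z\<close> is arbitrary, so the \<open>H\<close>-term is only bounded via \<open>C\<^sub>H\<close>; the extra factor
  \<open>\<eta>\<close> in the weights telescopes because \<open>\<eta>\<close> is nonincreasing.\<close>
lemma weighted_F_sum_le:
  assumes zX: "z \<in> X"
  shows "(\<Sum>j<K. \<eta> j * \<theta> j * (F z \<bullet> (y (Suc j) - z)))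
    \<le> \<eta> 0 * DX2 X / \<gamma> + CH X H * sqrt 2 * sqrt (DX2 X) * (\<Sum>j<K. (\<eta> j)\<^sup>2 * \<theta> j)"
proof -
  define C where "C = CH X H * sqrt 2 * sqrt (DX2 X)"
  define a where "a k = (norm (x k - z))\<^sup>2" for k
  define f where "f k = F z \<bullet> (y (Suc k) - z)" for k
  have "2 * (\<gamma> * ((\<Sum>j<K. \<eta> j * \<theta> j * f j) - C * (\<Sum>j<K. (\<eta> j)\<^sup>2 * \<theta> j)))
      = (\<Sum>j<K. 2 * \<gamma> * (\<eta> j * \<theta> j * f j - C * ((\<eta> j)\<^sup>2 * \<theta> j)))"
    by (simp add: sum_distrib_left sum_subtractf right_diff_distrib mult.assoc)
  also have "\<dots> \<le> \<eta> 0 * \<theta>_prev 0 * a 0"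
  proof (rule sum_le_telescope)
    fix k
    have "- (H z \<bullet> (y (Suc k) - z)) \<le> C"
      using H_inner_le_CH[OF zX y_in_X] by (simp add: C_def inner_diff_right)
    then have "2 * \<gamma> * \<eta> k * \<theta> k * - (H z \<bullet> (y (Suc k) - z)) \<le> 2 * \<gamma> * \<eta> k * \<theta> k * C"
      using \<gamma>_pos \<eta>_pos[of k] \<theta>_pos[of k] by (intro mult_left_mono) auto
    with weighted_descent[OF zX, of k]
    have "\<theta> k * a (Suc k) \<le> \<theta>_prev k * a k - 2 * \<gamma> * \<theta> k * f k + 2 * \<gamma> * \<eta> k * \<theta> k * C"
      unfolding a_def f_def by linarith
    from mult_left_mono[OF this less_imp_le[OF \<eta>_pos[of k]]]
    have "\<eta> k * \<theta> k * a (Suc k)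
        \<le> \<eta> k * \<theta>_prev k * a k - 2 * \<gamma> * (\<eta> k * \<theta> k * f k - C * ((\<eta> k)\<^sup>2 * \<theta> k))"
      by (simp only: power2_eq_square ring_distribs mult_ac)
    moreover have "\<eta> (Suc k) * \<theta> k * a (Suc k) \<le> \<eta> k * \<theta> k * a (Suc k)"
      using \<eta>_noninc[of k] \<theta>_pos[of k] by (intro mult_right_mono) (auto simp: a_def)
    ultimately show "2 * \<gamma> * (\<eta> k * \<theta> k * f k - C * ((\<eta> k)\<^sup>2 * \<theta> k))
        \<le> \<eta> k * \<theta>_prev k * a k - \<eta> (Suc k) * \<theta>_prev (Suc k) * a (Suc k)"
      unfolding \<theta>_prev_def nat.case by linarith
  qed (use \<eta>_pos \<theta>_prev_pos in \<open>simp add: a_def less_imp_le\<close>)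
  also have "\<dots> \<le> 2 * (\<eta> 0 * DX2 X)"
    using power2_norm_diff_le_DX2[OF compact_X x0 zX] \<eta>_pos[of 0] by (simp add: a_def \<theta>_prev_def)
  finally have "\<gamma> * ((\<Sum>j<K. \<eta> j * \<theta> j * f j) - C * (\<Sum>j<K. (\<eta> j)\<^sup>2 * \<theta> j)) \<le> \<eta> 0 * DX2 X"
    by simp
  then have "(\<Sum>j<K. \<eta> j * \<theta> j * f j) - C * (\<Sum>j<K. (\<eta> j)\<^sup>2 * \<theta> j) \<le> \<eta> 0 * DX2 X / \<gamma>"
    using \<gamma>_pos by (simp add: pos_le_divide_eq mult.commute)
  then show ?thesis unfolding C_def f_def by linarith
qed

lemma H_inner_ybar_le:
  assumes "z \<in> SOL X F" "K \<ge> 1"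
  shows "H z \<bullet> (ybar K - z) \<le> (DX2 X / \<gamma>) / (\<Sum>j<K. \<eta> j * \<theta> j)"
  using weighted_inner_ybar[of K "H z" z] weighted_H_sum_le[OF assms(1), of K]
  by (intro mult_imp_le_div_pos[OF weight_sum_pos[OF assms(2)]]) (simp add: mult.commute)

lemma F_inner_ybar_le:
  assumes "z \<in> X" "K \<ge> 1"
  shows "F z \<bullet> (ybar K - z) \<le> (\<eta> 0 * DX2 X / \<gamma> + CH X H * sqrt 2 * sqrt (DX2 X) * (\<Sum>j<K. (\<eta> j)\<^sup>2 * \<theta> j))
      / (\<Sum>j<K. \<eta> j * \<theta> j)"
  using weighted_inner_ybar[of K "F z" z] weighted_F_sum_le[OF assms(1), of K]
  by (intro mult_imp_le_div_pos[OF weight_sum_pos[OF assms(2)]]) (simp add: mult.commute)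

lemma Gap_SOL_bounds:
  assumes "K \<ge> 1"
  shows "- BH X F H * distS (ybar K) (SOL X F) \<le> Gap (ybar K) (SOL X F) H
    \<and> Gap (ybar K) (SOL X F) H \<le> (DX2 X / \<gamma>) / (\<Sum>j<K. \<eta> j * \<theta> j)"
  using Gap_ge_neg_dist[OF compact_SOL SOL_ne continuous_H_SOL]
    Gap_le[OF SOL_ne H_inner_ybar_le[OF _ assms]]
  unfolding BH_def by blast

lemma Gap_X_bounds:
  assumes "K \<ge> 1"
  shows "0 \<le> Gap (ybar K) X F \<and> Gap (ybar K) X F
    \<le> (\<eta> 0 * DX2 X / \<gamma> + CH X H * sqrt 2 * sqrt (DX2 X) * (\<Sum>j<K. (\<eta> j)\<^sup>2 * \<theta> j))
      / (\<Sum>j<K. \<eta> j * \<theta> j)"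
  using Gap_nonneg[OF compact_X continuous_F ybar_in_X] Gap_le[OF X(1) F_inner_ybar_le[OF _ assms]]
  by blast

context
  assumes weights_diverge: "filterlim (\<lambda>K. \<Sum>j<K. \<eta> j * \<theta> j) at_top sequentially"
    and weight_ratio: "(\<lambda>k. (\<Sum>j\<le>k. (\<eta> j)\<^sup>2 * \<theta> j) / (\<Sum>j\<le>k. \<eta> j * \<theta> j)) \<longlonglongrightarrow> 0"
begin

lemma H_bound_tendsto_0: "(\<lambda>K. (DX2 X / \<gamma>) / (\<Sum>j<K. \<eta> j * \<theta> j)) \<longlonglongrightarrow> 0"
  by (intro tendsto_divide_0[OF tendsto_const] filterlim_at_top_imp_at_infinity weights_diverge)

lemma F_bound_tendsto_0:
  "(\<lambda>K. (\<eta> 0 * DX2 X / \<gamma> + CH X H * sqrt 2 * sqrt (DX2 X) * (\<Sum>j<K. (\<eta> j)\<^sup>2 * \<theta> j))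
      / (\<Sum>j<K. \<eta> j * \<theta> j)) \<longlonglongrightarrow> 0"
proof -
  have ratio: "(\<lambda>K. (\<Sum>j<K. (\<eta> j)\<^sup>2 * \<theta> j) / (\<Sum>j<K. \<eta> j * \<theta> j)) \<longlonglongrightarrow> 0"
    by (rule LIMSEQ_imp_Suc) (use weight_ratio in \<open>simp add: lessThan_Suc_atMost\<close>)
  have "(\<lambda>K. (\<eta> 0 * DX2 X / \<gamma>) / (\<Sum>j<K. \<eta> j * \<theta> j)) \<longlonglongrightarrow> 0"
    by (intro tendsto_divide_0[OF tendsto_const] filterlim_at_top_imp_at_infinity weights_diverge)
  from tendsto_add[OF this tendsto_mult_right_zero[OF ratio, of "CH X H * sqrt 2 * sqrt (DX2 X)"]]
  show ?thesis by (simp add: add_divide_distrib)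
qed

lemma limit_point_in_bilevel_SOL:
  assumes r: "strict_mono r" and lim: "(ybar \<circ> r) \<longlonglongrightarrow> t"
  shows "t \<in> SOL (SOL X F) H"
proof -
  have "t \<in> X" using closed_sequentially[OF X(2) _ lim] ybar_in_X by simp
  then have "t \<in> SOL X F"
    using subseq_limit_inner_le[OF lim r F_bound_tendsto_0 F_inner_ybar_le]
    by (intro Minty_imp_SOL[OF X(3) continuous_F])
  then show ?thesis
    using subseq_limit_inner_le[OF lim r H_bound_tendsto_0 H_inner_ybar_le]
    by (intro Minty_imp_SOL[OF convex_SOL continuous_H_SOL])
qed

lemma ybar_tendsto_bilevel_solution: "\<exists>s. SOL (SOL X F) H = {s} \<and> ybar \<longlonglongrightarrow> s"
proof -
  obtain s r where "strict_mono r" "(ybar \<circ> r) \<longlonglongrightarrow> s"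
    using compact_X ybar_in_X unfolding compact_def by metis
  then have s: "s \<in> SOL (SOL X F) H" by (rule limit_point_in_bilevel_SOL)
  have unique: "t = s" if "t \<in> SOL (SOL X F) H" for t
    using SOL_strongly_monotone_unique[OF H_smono SOL_subset that s] .
  have "ybar \<longlonglongrightarrow> s"
    using compact_X ybar_in_X by (rule LIMSEQ_if_subseq_limits_eq) (use limit_point_in_bilevel_SOL unique in blast)
  with s unique show ?thesis by blast
qed

end

end

theorem theorem4p4:
  fixes X :: "'a::euclidean_space set"
    and F H :: "'a \<Rightarrow> 'a"
    and LF LH \<mu>H \<gamma> :: real
    and \<eta> \<Gamma> \<theta> :: "nat \<Rightarrow> real"
    and x y ybar :: "nat \<Rightarrow> 'a"
  assumes X: "X \<noteq> {}" "closed X" "convex X" "bounded X"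
    and F_lip: "LF-lipschitz_on X F" and F_mono: "monotone_op X F"
    and H_lip: "LH-lipschitz_on X H" and H_smono: "strongly_monotone_op \<mu>H X H"
    and SOL_ne: "SOL X F \<noteq> {}"
    and \<gamma>_pos: "\<gamma> > 0"
    and \<eta>_pos: "\<And>k. \<eta> k > 0"
    and \<eta>_noninc: "\<And>k. \<eta> (Suc k) \<le> \<eta> k"
    and step: "\<And>k. \<gamma>\<^sup>2 * LF\<^sup>2 + \<gamma> * \<eta> k * \<mu>H + \<gamma>\<^sup>2 * (\<eta> k)\<^sup>2 * LH\<^sup>2 \<le> 0.5"
    and x0: "x 0 \<in> X" and ybar0: "ybar 0 \<in> X"
    and \<Gamma>0: "\<Gamma> 0 = 0"
    and \<theta>0: "\<theta> 0 = 1 / (1 - \<gamma> * \<eta> 0 * \<mu>H)"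
    and y_rec: "\<And>k. y (Suc k) = proj X (x k - \<gamma> *\<^sub>R (F (x k) + \<eta> k *\<^sub>R H (x k)))"
    and x_rec: "\<And>k. x (Suc k) = proj X (x k - \<gamma> *\<^sub>R (F (y (Suc k)) + \<eta> k *\<^sub>R H (y (Suc k))))"
    and \<Gamma>_rec: "\<And>k. \<Gamma> (Suc k) = \<Gamma> k + \<eta> k * \<theta> k"
    and ybar_rec: "\<And>k. ybar (Suc k) =
          (1 / \<Gamma> (Suc k)) *\<^sub>R (\<Gamma> k *\<^sub>R ybar k + (\<eta> k * \<theta> k) *\<^sub>R y (Suc k))"
    and \<theta>_rec: "\<And>k. \<theta> (Suc k) = \<theta> k / (1 - \<gamma> * \<eta> (Suc k) * \<mu>H)"
  shows
    "(\<forall>K\<ge>1.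
        - BH X F H * distS (ybar K) (SOL X F) \<le> Gap (ybar K) (SOL X F) H \<and>
        Gap (ybar K) (SOL X F) H \<le> (DX2 X / \<gamma>) / (\<Sum>j<K. \<eta> j * \<theta> j))
   \<and> (\<forall>K\<ge>1.
        0 \<le> Gap (ybar K) X F \<and>
        Gap (ybar K) X F \<le>
          (\<eta> 0 * DX2 X / \<gamma> + CH X H * sqrt 2 * sqrt (DX2 X) * (\<Sum>j<K. (\<eta> j)\<^sup>2 * \<theta> j))
          / (\<Sum>j<K. \<eta> j * \<theta> j))
   \<and> ((filterlim (\<lambda>K. \<Sum>j<K. \<eta> j * \<theta> j) at_top sequentially \<and>
        ((\<lambda>k. (\<Sum>j\<le>k. (\<eta> j)\<^sup>2 * \<theta> j) / (\<Sum>j\<le>k. \<eta> j * \<theta> j)) \<longlonglongrightarrow> 0))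
      \<longrightarrow> (\<exists>s. SOL (SOL X F) H = {s} \<and> ybar \<longlonglongrightarrow> s))"
proof -
  interpret regularized_extragradient X F H LF LH \<mu>H \<gamma> \<eta> \<Gamma> \<theta> x y ybar
    by (rule regularized_extragradient.intro) (fact assms)+
  show ?thesis
    using Gap_SOL_bounds Gap_X_bounds ybar_tendsto_bilevel_solution by blast
qed

end
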